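(* Fix $c\in(0,1/2)$, a set $S\subseteq\mathbb R^d$, and a concept class $\mathbb D$ of covariate-outcome distributions satisfying Condition 3 with constant $c$, such that every $\mathcal P\in\mathbb D$ has $\mathrm{supp}(\mathcal P_X)=\mathbb R^d$. Then there exists a map $f$ from distributions on $\mathbb R^d\times\{0,1\}\times\mathbb R$ to $\mathbb R$ such that $f(\mathcal C_{\mathcal D})=\tau_{\mathcal D}$ for every observational study $\mathcal D$ that is a $c$-RD-design (with this set $S$) and is realizable with respect to $\mathbb D$ (i.e. $\mathcal D_{X,Y(0)},\mathcal D_{X,Y(1)}\in\mathbb D$).
   Context: An observational study is a probability distribution $\mathcal D$ of a random tuple $(X,T,Y(0),Y(1))$ with $X\in\mathbb R^d$, $T\in\{0,1\}$, $Y(0),Y(1)\in\mathbb R$; the laws $\mathcal D_{X,Y(t)}$ of $(X,Y(t))$ have densities. The censored distribution $\mathcal C_{\mathcal D}$ is the law of $(X,T,Y(T))$; $\tau_{\mathcal D}=\mathbb E_{\mathcal D}[Y(1)-Y(0)]$. Generalized propensity scores: $p_t(x,y)=\Pr_{\mathcal D}[T=t\mid X=x,Y(t)=y]$. For a distribution $\mathcal P$ with density on $\mathbb R^d\times\mathbb R$, $\mathcal P(x,y)$ denotes its density and $\mathcal P_X$ its $x$-marginal. $\mathrm{vol}$ denotes Lebesgue measure. $c$-RD-design: $\mathcal D$ is a $c$-RD-design if there is $S\subseteq\mathbb R^d$ with $\mathrm{vol}(S)>c$, $\mathrm{vol}(\mathbb R^d\setminus S)>c$, and $p_0(x,y)=\mathbb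 1\{x\notin S\}$, $p_1(x,y)=\mathbb 1\{x\in S\}$ for all $x\in\mathbb R^d,y\in\mathbb R$. Condition 3 (constant $c$): for all $\mathcal P,\mathcal Q\in\mathbb D$ with $\mathbb E_{(x,y)\sim\mathcal P}[y]\neq\mathbb E_{(x,y)\sim\mathcal Q}[y]$, either $\mathcal P_X\neq\mathcal Q_X$, or there is no set $S'\subseteq\mathbb R^d$ with $\mathrm{vol}(S')\ge c$ such that $\mathcal P(x,y)=\mathcal Q(x,y)$ for all $(x,y)\in S'\times\mathbb R$. *)

theory Defs
  imports "HOL-Probability.Probability"
begin

text \<open>An observational study is modelled as a probability measure D on the Borel sets of
  the sample space of tuples (X, T, Y(0), Y(1)), X in a Euclidean space, T in bool
  (True = treatment 1), Y(0), Y(1) real.\<close>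

definition obs_X :: "'a \<times> bool \<times> real \<times> real \<Rightarrow> 'a" where
  "obs_X \<omega> = fst \<omega>"
definition obs_T :: "'a \<times> bool \<times> real \<times> real \<Rightarrow> bool" where
  "obs_T \<omega> = fst (snd \<omega>)"
definition obs_Y :: "bool \<Rightarrow> 'a \<times> bool \<times> real \<times> real \<Rightarrow> real" where
  "obs_Y t \<omega> = (if t then snd (snd (snd \<omega>)) else fst (snd (snd \<omega>)))"

definition law_XY :: "('a::euclidean_space \<times> bool \<times> real \<times> real) measure \<Rightarrow> bool
    \<Rightarrow> ('a \<times> real) measure" where
  "law_XY D t = distr D borel (\<lambda>\<omega>. (obs_X \<omega>, obs_Y t \<omega>))"

definition has_density :: "('a::euclidean_space \<times> real) measure \<Rightarrow> bool" where
  "has_density P \<longleftrightarrow> (\<exists>g. g \<in> borel_measurable lborel \<and> (\<forall>z. g z \<ge> 0)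
      \<and> P = density lborel (\<lambda>z. ennreal (g z)))"

text \<open>Observational study: a Borel probability measure whose laws of (X,Y(t)) have densities;
  outcomes are integrable so that tau is well defined.\<close>
definition obs_study :: "('a::euclidean_space \<times> bool \<times> real \<times> real) measure \<Rightarrow> bool" where
  "obs_study D \<longleftrightarrow> prob_space D \<and> sets D = sets borel
     \<and> has_density (law_XY D False) \<and> has_density (law_XY D True)
     \<and> integrable D (obs_Y False) \<and> integrable D (obs_Y True)"

definition censored :: "('a::euclidean_space \<times> bool \<times> real \<times> real) measure
    \<Rightarrow> ('a \<times> bool \<times> real) measure" where
  "censored D = distr D borel (\<lambda>\<omega>. (obs_X \<omega>, obs_T \<omega>, obs_Y (obs_T \<omega>) \<omega>))"

definition ate :: "('a::euclidean_space \<times> bool \<times> real \<times> real) measure \<Rightarrow> real" where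
  "ate D = (\<integral>\<omega>. obs_Y True \<omega> - obs_Y False \<omega> \<partial>D)"

text \<open>p is (a version of) the generalized propensity score
  p_t(x,y) = Pr[T = t | X = x, Y(t) = y], i.e. a measurable function such that
  Pr[T = t, (X,Y(t)) \<in> A] = integral over A of p w.r.t. the law of (X,Y(t)).\<close>
definition is_gen_propensity ::
  "('a::euclidean_space \<times> bool \<times> real \<times> real) measure \<Rightarrow> bool \<Rightarrow> ('a \<times> real \<Rightarrow> real) \<Rightarrow> bool" where
  "is_gen_propensity D t p \<longleftrightarrow> p \<in> borel_measurable borel \<and>
     (\<forall>A \<in> sets borel. measure D {\<omega> \<in> space D. obs_T \<omega> = t \<and> (obs_X \<omega>, obs_Y t \<omega>) \<in> A}
        = (\<integral>z. indicator A z * p z \<partial>(law_XY D t)))"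

definition RD_design :: "real \<Rightarrow> 'a::euclidean_space set
    \<Rightarrow> ('a \<times> bool \<times> real \<times> real) measure \<Rightarrow> bool" where
  "RD_design c S D \<longleftrightarrow> S \<in> sets lborel
     \<and> emeasure lborel S > ennreal c \<and> emeasure lborel (- S) > ennreal c
     \<and> is_gen_propensity D False (\<lambda>(x, y). indicator (- S) x)
     \<and> is_gen_propensity D True (\<lambda>(x, y). indicator S x)"

definition x_marginal :: "('a::euclidean_space \<times> real) measure \<Rightarrow> 'a measure" where
  "x_marginal P = distr P borel fst"

definition mean_outcome :: "('a::euclidean_space \<times> real) measure \<Rightarrow> real" where
  "mean_outcome P = (\<integral>z. snd z \<partial>P)"

text \<open>Densities of P and Q agree on S' x R (as densities, i.e. the measures agree there).\<close>
definition agree_on_strip :: "('a::euclidean_space \<times> real) measure \<Rightarrow> ('a \<times> real) measure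
    \<Rightarrow> 'a set \<Rightarrow> bool" where
  "agree_on_strip P Q S' \<longleftrightarrow>
     (\<forall>A \<in> sets borel. A \<subseteq> S' \<times> UNIV \<longrightarrow> emeasure P A = emeasure Q A)"

definition condition3 :: "real \<Rightarrow> ('a::euclidean_space \<times> real) measure set \<Rightarrow> bool" where
  "condition3 c DD \<longleftrightarrow> (\<forall>P \<in> DD. \<forall>Q \<in> DD. mean_outcome P \<noteq> mean_outcome Q \<longrightarrow>
      (x_marginal P \<noteq> x_marginal Q \<or>
       \<not> (\<exists>S' \<in> sets lborel. emeasure lborel S' \<ge> ennreal c \<and> agree_on_strip P Q S')))"

definition support :: "'a::euclidean_space measure \<Rightarrow> 'a set" where
  "support M = {x. \<forall>e>0. emeasure M (ball x e) > 0}"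

definition realizable :: "('a::euclidean_space \<times> real) measure set
    \<Rightarrow> ('a \<times> bool \<times> real \<times> real) measure \<Rightarrow> bool" where
  "realizable DD D \<longleftrightarrow> law_XY D False \<in> DD \<and> law_XY D True \<in> DD"

end

theory Submission
  imports Defs
begin

text \<open>In an RD design every unit with covariate in \<open>S\<close> is treated and every other unit is
  not, so on the strip \<open>S \<times> \<real>\<close> the law of \<open>(X, Y(1))\<close> coincides with the censored law of
  \<open>(X, Y(T))\<close> on the event \<open>T = 1\<close>, and likewise on \<open>(- S) \<times> \<real>\<close> for \<open>Y(0)\<close>; the
  \<open>X\<close>-marginals are visible in the censored law as well. Both strips have volume above \<open>c\<close>,
  so by Condition 3 two realizable RD designs with the same censored law have the same mean
  outcome under each treatment, hence the same \<open>\<tau>\<close>: \<open>\<tau>\<close> is a function of the censored law.\<close>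

lemma treatment_slice_borel:
  "{\<omega>::'a::topological_space \<times> bool \<times> 'b::topological_space. fst (snd \<omega>) = t} \<in> sets borel"
proof -
  have "{\<omega>::'a \<times> bool \<times> 'b. fst (snd \<omega>) = t} = UNIV \<times> {t} \<times> UNIV" by auto
  then show ?thesis by (simp add: borel_open open_Times Topological_Spaces.open_discrete)
qed

lemma measurable_obs_XY:
  fixes D :: "('a::euclidean_space \<times> bool \<times> real \<times> real) measure"
  assumes "sets D = sets borel"
  shows "(\<lambda>\<omega>. (obs_X \<omega>, obs_Y t \<omega>)) \<in> borel_measurable D"
  unfolding measurable_cong_sets[OF assms refl] obs_X_def obs_Y_def
  by (cases t) (auto intro!: borel_measurable_continuous_onI continuous_intros)

lemma measurable_censoring:
  fixes D :: "('a::euclidean_space \<times> bool \<times> real \<times> real) measure"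
  assumes "sets D = sets borel"
  shows "(\<lambda>\<omega>. (obs_X \<omega>, obs_T \<omega>, obs_Y (obs_T \<omega>) \<omega>)) \<in> borel_measurable D"
proof -
  have censoring_as_If: "(\<lambda>\<omega>::'a \<times> bool \<times> real \<times> real. (obs_X \<omega>, obs_T \<omega>, obs_Y (obs_T \<omega>) \<omega>)) =
     (\<lambda>\<omega>. if fst (snd \<omega>) then (fst \<omega>, True, snd (snd (snd \<omega>)))
          else (fst \<omega>, False, fst (snd (snd \<omega>))))"
    by (auto simp: obs_X_def obs_T_def obs_Y_def fun_eq_iff)
  have treated: "{\<omega>\<in>space borel. fst (snd \<omega>)} \<in> sets (borel :: ('a \<times> bool \<times> real \<times> real) measure)"
    using treatment_slice_borel[of True, where 'a='a and 'b="real \<times> real"] by simp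
  show ?thesis unfolding measurable_cong_sets[OF assms refl] censoring_as_If
    by (rule measurable_If[OF _ _ treated])
      (auto intro!: borel_measurable_continuous_onI continuous_intros)
qed

lemma prob_space_law_XY:
  assumes "prob_space D" and "sets D = sets borel"
  shows "prob_space (law_XY D t)"
  unfolding law_XY_def
  using prob_space.prob_space_distr[OF assms(1) measurable_obs_XY[OF assms(2)]] .

lemma prob_space_censored:
  assumes "prob_space D" and "sets D = sets borel"
  shows "prob_space (censored D)"
  unfolding censored_def
  using prob_space.prob_space_distr[OF assms(1) measurable_censoring[OF assms(2)]] .

definition censored_event :: "bool \<Rightarrow> ('a \<times> real) set \<Rightarrow> ('a \<times> bool \<times> real) set" where
  "censored_event t A = {z. fst (snd z) = t \<and> (fst z, snd (snd z)) \<in> A}"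

lemma censored_event_borel:
  fixes A :: "('a::topological_space \<times> real) set"
  assumes "A \<in> sets borel"
  shows "censored_event t A \<in> sets borel"
proof -
  have "(\<lambda>z::'a \<times> bool \<times> real. (fst z, snd (snd z))) \<in> borel_measurable borel"
    by (auto intro!: borel_measurable_continuous_onI continuous_intros)
  from measurable_sets[OF this assms]
  have "(\<lambda>z::'a \<times> bool \<times> real. (fst z, snd (snd z))) -` A \<in> sets borel" by simp
  moreover have "censored_event t A
      = {z. fst (snd z) = t} \<inter> (\<lambda>z::'a \<times> bool \<times> real. (fst z, snd (snd z))) -` A"
    by (auto simp: censored_event_def)
  ultimately show ?thesis using treatment_slice_borel by auto
qed

lemma measure_censored_event:
  fixes D :: "('a::euclidean_space \<times> bool \<times> real \<times> real) measure"
  assumes "sets D = sets borel" and "A \<in> sets borel"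
  shows "measure (censored D) (censored_event t A)
    = measure D {\<omega> \<in> space D. obs_T \<omega> = t \<and> (obs_X \<omega>, obs_Y t \<omega>) \<in> A}"
proof -
  have "measure (censored D) (censored_event t A) = measure D
      ((\<lambda>\<omega>. (obs_X \<omega>, obs_T \<omega>, obs_Y (obs_T \<omega>) \<omega>)) -` censored_event t A \<inter> space D)"
    unfolding censored_def
    using measurable_censoring[OF assms(1)] censored_event_borel[OF assms(2)] by (rule measure_distr)
  also have "(\<lambda>\<omega>. (obs_X \<omega>, obs_T \<omega>, obs_Y (obs_T \<omega>) \<omega>)) -` censored_event t A \<inter> space D
      = {\<omega> \<in> space D. obs_T \<omega> = t \<and> (obs_X \<omega>, obs_Y t \<omega>) \<in> A}"
    by (auto simp: censored_event_def obs_T_def)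
  finally show ?thesis .
qed

lemma emeasure_law_XY_eq_censored_event:
  fixes D :: "('a::euclidean_space \<times> bool \<times> real \<times> real) measure"
  assumes D: "prob_space D" "sets D = sets borel"
    and propensity: "is_gen_propensity D t (\<lambda>(x, y). indicator St x)"
    and A: "A \<in> sets borel" "A \<subseteq> St \<times> UNIV"
  shows "emeasure (law_XY D t) A = emeasure (censored D) (censored_event t A)"
proof -
  interpret L: prob_space "law_XY D t" using prob_space_law_XY[OF D] .
  interpret C: prob_space "censored D" using prob_space_censored[OF D] .
  have "measure (censored D) (censored_event t A)
      = (\<integral>z. indicator A z * (\<lambda>(x, y). indicator St x) z \<partial>law_XY D t)"
    using propensity A(1) measure_censored_event[OF D(2) A(1)]
    unfolding is_gen_propensity_def by simp
  also have "\<dots> = (\<integral>z. indicator A z \<partial>law_XY D t)"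
    using A(2) by (intro Bochner_Integration.integral_cong) (auto simp: indicator_def)
  also have "\<dots> = measure (law_XY D t) A"
    using A(1) by (simp add: law_XY_def L.emeasure_eq_measure[symmetric])
  finally show ?thesis
    by (simp add: L.emeasure_eq_measure C.emeasure_eq_measure)
qed

lemma x_marginal_law_XY:
  fixes D :: "('a::euclidean_space \<times> bool \<times> real \<times> real) measure"
  assumes "sets D = sets borel"
  shows "x_marginal (law_XY D t) = distr (censored D) borel fst"
proof -
  have "x_marginal (law_XY D t) = distr D borel (fst \<circ> (\<lambda>\<omega>. (obs_X \<omega>, obs_Y t \<omega>)))"
    unfolding x_marginal_def law_XY_def
    by (rule distr_distr)
      (auto intro!: measurable_obs_XY[OF assms] borel_measurable_continuous_onI continuous_intros)
  also have "\<dots> = distr D borel (fst \<circ> (\<lambda>\<omega>. (obs_X \<omega>, obs_T \<omega>, obs_Y (obs_T \<omega>) \<omega>)))"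
    by (simp add: o_def)
  also have "\<dots> = distr (censored D) borel fst"
    unfolding censored_def
    by (rule distr_distr[symmetric])
      (auto intro!: measurable_censoring[OF assms] borel_measurable_continuous_onI continuous_intros)
  finally show ?thesis .
qed

lemma mean_outcome_law_XY:
  fixes D :: "('a::euclidean_space \<times> bool \<times> real \<times> real) measure"
  assumes "sets D = sets borel"
  shows "mean_outcome (law_XY D t) = (\<integral>\<omega>. obs_Y t \<omega> \<partial>D)"
  unfolding mean_outcome_def law_XY_def
  using measurable_obs_XY[OF assms]
  by (subst integral_distr) (auto intro!: borel_measurable_continuous_onI continuous_intros)

lemma ate_eq_mean_outcome_diff:
  assumes "obs_study D"
  shows "ate D = mean_outcome (law_XY D True) - mean_outcome (law_XY D False)"
  using assms unfolding obs_study_def ate_def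
  by (simp add: mean_outcome_law_XY Bochner_Integration.integral_diff)

lemma mean_outcome_law_XY_eq_if_censored_eq:
  fixes D1 D2 :: "('a::euclidean_space \<times> bool \<times> real \<times> real) measure"
  assumes condition3: "condition3 c DD"
    and realizable: "law_XY D1 t \<in> DD" "law_XY D2 t \<in> DD"
    and D1: "prob_space D1" "sets D1 = sets borel"
    and D2: "prob_space D2" "sets D2 = sets borel"
    and censored_eq: "censored D1 = censored D2"
    and St: "St \<in> sets lborel" "ennreal c \<le> emeasure lborel St"
    and propensity1: "is_gen_propensity D1 t (\<lambda>(x, y). indicator St x)"
    and propensity2: "is_gen_propensity D2 t (\<lambda>(x, y). indicator St x)"
  shows "mean_outcome (law_XY D1 t) = mean_outcome (law_XY D2 t)"
proof -
  have "x_marginal (law_XY D1 t) = x_marginal (law_XY D2 t)"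
    using x_marginal_law_XY[OF D1(2)] x_marginal_law_XY[OF D2(2)] censored_eq by simp
  moreover have "agree_on_strip (law_XY D1 t) (law_XY D2 t) St"
    unfolding agree_on_strip_def
    using emeasure_law_XY_eq_censored_event[OF D1 propensity1]
      emeasure_law_XY_eq_censored_event[OF D2 propensity2] censored_eq
    by simp
  ultimately show ?thesis
    using condition3 realizable St unfolding condition3_def by blast
qed

lemma ate_eq_if_censored_eq_RD_design:
  assumes condition3: "condition3 c DD"
    and study1: "obs_study D1" "RD_design c S D1" "realizable DD D1"
    and study2: "obs_study D2" "RD_design c S D2" "realizable DD D2"
    and censored_eq: "censored D1 = censored D2"
  shows "ate D1 = ate D2"
proof -
  have D1: "prob_space D1" "sets D1 = sets borel" and D2: "prob_space D2" "sets D2 = sets borel"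
    using study1(1) study2(1) unfolding obs_study_def by auto
  have S: "S \<in> sets lborel" "- S \<in> sets lborel"
    and volume: "ennreal c \<le> emeasure lborel S" "ennreal c \<le> emeasure lborel (- S)"
    using study1(2) unfolding RD_design_def by (auto simp: sets.compl_sets)
  have "mean_outcome (law_XY D1 True) = mean_outcome (law_XY D2 True)"
    using study1(2,3) study2(2,3) unfolding RD_design_def realizable_def
    by (intro mean_outcome_law_XY_eq_if_censored_eq[OF condition3 _ _ D1 D2 censored_eq S(1) volume(1)])
      auto
  moreover have "mean_outcome (law_XY D1 False) = mean_outcome (law_XY D2 False)"
    using study1(2,3) study2(2,3) unfolding RD_design_def realizable_def
    by (intro mean_outcome_law_XY_eq_if_censored_eq[OF condition3 _ _ D1 D2 censored_eq S(2) volume(2)])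
      auto
  ultimately show ?thesis
    using ate_eq_mean_outcome_diff[OF study1(1)] ate_eq_mean_outcome_diff[OF study2(1)] by simp
qed

lemma ex_fun_factors_through:
  assumes "\<And>x y. P x \<Longrightarrow> P y \<Longrightarrow> h x = h y \<Longrightarrow> g x = g y"
  shows "\<exists>f. \<forall>x. P x \<longrightarrow> f (h x) = g x"
proof (intro exI allI impI)
  fix x assume "P x"
  then have "P (SOME y. P y \<and> h y = h x) \<and> h (SOME y. P y \<and> h y = h x) = h x"
    by (intro someI) auto
  with \<open>P x\<close> show "g (SOME y. P y \<and> h y = h x) = g x"
    using assms by metis
qed

theorem corollary4p7:
  fixes c :: real and S :: "'a::euclidean_space set"
    and DD :: "('a \<times> real) measure set"
  assumes "0 < c" and "c < 1/2"
    and "\<forall>P \<in> DD. prob_space P \<and> sets P = sets borel \<and> has_density P"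
    and "condition3 c DD"
    and "\<forall>P \<in> DD. support (x_marginal P) = UNIV"
  shows "\<exists>f :: ('a \<times> bool \<times> real) measure \<Rightarrow> real.
           \<forall>D. obs_study D \<and> RD_design c S D \<and> realizable DD D \<longrightarrow> f (censored D) = ate D"
proof (rule ex_fun_factors_through)
  fix D1 D2 :: "('a \<times> bool \<times> real \<times> real) measure"
  assume "obs_study D1 \<and> RD_design c S D1 \<and> realizable DD D1"
    and "obs_study D2 \<and> RD_design c S D2 \<and> realizable DD D2"
    and "censored D1 = censored D2"
  then show "ate D1 = ate D2"
    using ate_eq_if_censored_eq_RD_design[OF \<open>condition3 c DD\<close>] by blast
qed

end
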